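(* There exist connected graphs $G$ and integers $k$ with $k-1\ge\chi(G)$ for which $\underline{\mathrm{lcs}}(G,k)<\underline{\mathrm{lcs}}(G,k-1)$; that is, $\underline{\mathrm{lcs}}(G,k)$ is not in general monotone non-decreasing in $k$.
   Context: All graphs are finite and simple. For a graph $G=(V,E)$ and an integer $k\ge\chi(G)$, a proper $k$-colouring is a map $c:V\to[k]$ with $c(u)\neq c(v)$ for every edge $uv$. A set $S\subseteq V$ is a determining set for $(G,c)$ if there is no proper $k$-colouring $c'\neq c$ with $c'(s)=c(s)$ for all $s\in S$; a critical set is an inclusion-minimal determining set. $\mathrm{lcs}(G,c)$ is the size of a largest critical set for $(G,c)$, and $\underline{\mathrm{lcs}}(G,k)$ is the minimum of $\mathrm{lcs}(G,c)$ over all proper $k$-colourings $c$ of $G$. *)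

theory Defs
  imports Main
begin

definition simple_graph :: "'a set \<Rightarrow> 'a set set \<Rightarrow> bool" where
  "simple_graph V E \<longleftrightarrow> finite V \<and> E \<subseteq> {{u, v} | u v. u \<in> V \<and> v \<in> V \<and> u \<noteq> v}"

definition graph_connected :: "'a set \<Rightarrow> 'a set set \<Rightarrow> bool" where
  "graph_connected V E \<longleftrightarrow> V \<noteq> {} \<and>
     (\<forall>u\<in>V. \<forall>v\<in>V. (u, v) \<in> {(x, y). {x, y} \<in> E}\<^sup>*)"

definition proper_colouring :: "'a set \<Rightarrow> 'a set set \<Rightarrow> nat \<Rightarrow> ('a \<Rightarrow> nat) \<Rightarrow> bool" where
  "proper_colouring V E k c \<longleftrightarrow>
     (\<forall>v\<in>V. c v \<in> {1..k}) \<and> (\<forall>u\<in>V. \<forall>v\<in>V. {u, v} \<in> E \<longrightarrow> c u \<noteq> c v)"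

definition chromatic_number :: "'a set \<Rightarrow> 'a set set \<Rightarrow> nat" where
  "chromatic_number V E = (LEAST k. \<exists>c. proper_colouring V E k c)"

text \<open>Two colourings are considered equal iff they agree on V.\<close>
definition determining_set :: "'a set \<Rightarrow> 'a set set \<Rightarrow> nat \<Rightarrow> ('a \<Rightarrow> nat) \<Rightarrow> 'a set \<Rightarrow> bool" where
  "determining_set V E k c S \<longleftrightarrow> S \<subseteq> V \<and>
     \<not> (\<exists>c'. proper_colouring V E k c' \<and> (\<forall>s\<in>S. c' s = c s) \<and> (\<exists>v\<in>V. c' v \<noteq> c v))"

definition critical_set :: "'a set \<Rightarrow> 'a set set \<Rightarrow> nat \<Rightarrow> ('a \<Rightarrow> nat) \<Rightarrow> 'a set \<Rightarrow> bool" where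
  "critical_set V E k c S \<longleftrightarrow> determining_set V E k c S \<and>
     (\<forall>T. T \<subset> S \<longrightarrow> \<not> determining_set V E k c T)"

definition lcs :: "'a set \<Rightarrow> 'a set set \<Rightarrow> nat \<Rightarrow> ('a \<Rightarrow> nat) \<Rightarrow> nat" where
  "lcs V E k c = Max {card S | S. critical_set V E k c S}"

definition lcs_min :: "'a set \<Rightarrow> 'a set set \<Rightarrow> nat \<Rightarrow> nat" where
  "lcs_min V E k = Min {lcs V E k c | c. proper_colouring V E k c}"

end

theory Submission
  imports Defs
begin

text \<open>
  The example is \<open>K\<^sub>5\<close> on \<open>{0,...,4}\<close> together with a vertex 5 adjacent to 0 and 1 and a
  pendant vertex 6 adjacent to 0; its chromatic number is 5.

  With five colours the clique uses every colour, so the colour of a clique vertex \<open>x\<close> is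
  forced by the other four. Choosing \<open>x \<in> {2,3,4}\<close> coloured differently from 5 and 6 makes
  \<open>V - {x}\<close> a critical set of size 6: once \<open>x\<close> is free as well, every other vertex can be
  recoloured (clique vertices by swapping colours with \<open>x\<close>, 5 and 6 because they have few
  neighbours). Hence every 5-colouring has a critical set of size 6.

  With six colours, colour 0,...,4 by 1,...,5, vertex 5 by 6 and vertex 6 by 2. Each of
  \<open>2,...,6\<close> can be recoloured on its own, so it lies in every determining set, while fixing
  all of them leaves a single colour for 0 and then for 1. So \<open>{2,...,6}\<close> is the only
  critical set, of size 5.
\<close>

lemma proper_colouring_range:
  "proper_colouring V E k c \<Longrightarrow> v \<in> V \<Longrightarrow> c v \<in> {1..k}"
  unfolding proper_colouring_def by blast

lemma determining_set_mono:
  "determining_set V E k c T \<Longrightarrow> T \<subseteq> S \<Longrightarrow> S \<subseteq> V \<Longrightarrow> determining_set V E k c S"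
  unfolding determining_set_def by blast

lemma not_determining_setI:
  assumes "proper_colouring V E k c'" "\<forall>s\<in>S. c' s = c s" "v \<in> V" "c' v \<noteq> c v"
  shows "\<not> determining_set V E k c S"
  using assms unfolding determining_set_def by blast

lemma recolourable_vertex_in_determining_set:
  assumes "determining_set V E k c S" "v \<in> V" "proper_colouring V E k (c(v := a))" "a \<noteq> c v"
  shows "v \<in> S"
proof (rule ccontr)
  assume "v \<notin> S"
  then have "\<forall>s\<in>S. (c(v := a)) s = c s" by simp
  then show False
    using not_determining_setI[OF assms(3) _ assms(2)] assms(1,4) by simp
qed

lemma critical_set_iff_remove:
  "critical_set V E k c S \<longleftrightarrow>
     determining_set V E k c S \<and> (\<forall>v\<in>S. \<not> determining_set V E k c (S - {v}))"
proof
  assume "critical_set V E k c S"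
  then show "determining_set V E k c S \<and> (\<forall>v\<in>S. \<not> determining_set V E k c (S - {v}))"
    unfolding critical_set_def by blast
next
  assume det: "determining_set V E k c S \<and> (\<forall>v\<in>S. \<not> determining_set V E k c (S - {v}))"
  have "\<not> determining_set V E k c T" if "T \<subset> S" for T
  proof
    assume "determining_set V E k c T"
    obtain v where "v \<in> S" "T \<subseteq> S - {v}" using \<open>T \<subset> S\<close> by blast
    moreover have "S - {v} \<subseteq> V" using det unfolding determining_set_def by blast
    ultimately show False
      using det determining_set_mono[OF \<open>determining_set V E k c T\<close>] by blast
  qed
  then show "critical_set V E k c S" using det unfolding critical_set_def by blast
qed

lemma critical_set_exists:
  assumes "finite V"
  shows "\<exists>S. critical_set V E k c S"
proof -
  let ?D = "{S. determining_set V E k c S}"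
  have "?D \<subseteq> Pow V" unfolding determining_set_def by blast
  then have "finite ?D" using assms finite_subset by blast
  moreover have "V \<in> ?D" unfolding determining_set_def by blast
  ultimately obtain S where "S \<in> ?D" "\<forall>T\<in>?D. T \<le> S \<longrightarrow> S = T"
    using finite_has_minimal[of ?D] by blast
  then have "critical_set V E k c S" unfolding critical_set_def by blast
  then show ?thesis ..
qed

lemma finite_critical_set_cards:
  assumes "finite V"
  shows "finite {card S | S. critical_set V E k c S}"
proof -
  have "{card S | S. critical_set V E k c S} \<subseteq> card ` Pow V"
    unfolding critical_set_def determining_set_def by blast
  then show ?thesis using assms finite_subset by blast
qed

lemma card_le_lcs:
  "finite V \<Longrightarrow> critical_set V E k c S \<Longrightarrow> card S \<le> lcs V E k c"
  unfolding lcs_def by (rule Max_ge) (auto intro: finite_critical_set_cards)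

lemma lcs_le:
  assumes "finite V" "\<And>S. critical_set V E k c S \<Longrightarrow> card S \<le> m"
  shows "lcs V E k c \<le> m"
  unfolding lcs_def
  using critical_set_exists[OF assms(1)] finite_critical_set_cards[OF assms(1)] assms(2)
  by (intro Max.boundedI) auto

lemma lcs_le_card: "finite V \<Longrightarrow> lcs V E k c \<le> card V"
  by (rule lcs_le) (auto simp: critical_set_def determining_set_def intro: card_mono)

lemma finite_lcs_values:
  assumes "finite V"
  shows "finite {lcs V E k c | c. proper_colouring V E k c}"
proof -
  have "{lcs V E k c | c. proper_colouring V E k c} \<subseteq> {..card V}"
    using lcs_le_card[OF assms] by auto
  then show ?thesis using finite_subset by blast
qed

lemma lcs_min_le:
  "finite V \<Longrightarrow> proper_colouring V E k c \<Longrightarrow> lcs_min V E k \<le> lcs V E k c"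
  unfolding lcs_min_def by (rule Min_le) (auto intro: finite_lcs_values)

lemma le_lcs_min:
  assumes "finite V" "proper_colouring V E k c\<^sub>0"
    and "\<And>c. proper_colouring V E k c \<Longrightarrow> m \<le> lcs V E k c"
  shows "m \<le> lcs_min V E k"
  unfolding lcs_min_def using finite_lcs_values[OF assms(1)] assms(2,3)
  by (intro Min.boundedI) auto

lemma ex_colour_avoiding:
  fixes xs :: "nat list"
  assumes "length xs < k"
  shows "\<exists>z\<in>{1..k}. z \<notin> set xs"
proof (rule ccontr)
  assume "\<not> ?thesis"
  then have "card {1..k} \<le> card (set xs)" by (intro card_mono) auto
  then show False using assms card_length[of xs] by simp
qed

lemma unique_colour_outside:
  fixes A :: "nat set"
  assumes "A \<subseteq> {1..k}" "card A + 1 = k" "p \<in> {1..k} - A" "q \<in> {1..k} - A"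
  shows "p = q"
proof -
  have "card ({1..k} - A) = 1"
    using assms(1,2) card_Diff_subset[of A "{1..k}"] finite_subset[OF assms(1)] by simp
  then obtain z where "{1..k} - A = {z}" by (rule card_1_singletonE)
  then show ?thesis using assms(3,4) by auto
qed

definition example_V :: "nat set" where
  "example_V = {0, 1, 2, 3, 4, 5, 6}"

definition example_E :: "nat set set" where
  "example_E = {{0,1}, {0,2}, {0,3}, {0,4}, {1,2}, {1,3}, {1,4}, {2,3}, {2,4}, {3,4},
                {0,5}, {1,5}, {0,6}}"

lemma finite_example_V: "finite example_V"
  by (simp add: example_V_def)

lemma simple_graph_example: "simple_graph example_V example_E"
proof -
  have edge: "{u, v} \<in> {{u, v} | u v. u \<in> example_V \<and> v \<in> example_V \<and> u \<noteq> v}"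
    if "u \<in> example_V" "v \<in> example_V" "u \<noteq> v" for u v
    using that by blast
  show ?thesis
    unfolding simple_graph_def example_E_def insert_subset
    by (intro conjI empty_subsetI edge) (simp_all add: example_V_def)
qed

lemma graph_connected_example: "graph_connected example_V example_E"
proof -
  let ?R = "{(x, y). {x, y} \<in> example_E}"
  have hub: "(0, u) \<in> ?R\<^sup>* \<and> (u, 0) \<in> ?R\<^sup>*" if "u \<in> example_V" for u
  proof (cases "u = 0")
    case False
    then have "{0, u} \<in> example_E" "{u, 0} \<in> example_E"
      using that unfolding example_V_def example_E_def by (auto simp: doubleton_eq_iff)
    then show ?thesis by auto
  qed simp
  show ?thesis
    unfolding graph_connected_def
  proof (intro conjI ballI)
    show "example_V \<noteq> {}" by (simp add: example_V_def)
  next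
    fix u v assume "u \<in> example_V" "v \<in> example_V"
    then show "(u, v) \<in> ?R\<^sup>*" using hub by (meson rtrancl_trans)
  qed
qed

lemma proper_colouring_example_iff:
  "proper_colouring example_V example_E k c \<longleftrightarrow>
     (\<forall>v\<in>example_V. c v \<in> {1..k}) \<and>
     c 0 \<noteq> c 1 \<and> c 0 \<noteq> c 2 \<and> c 0 \<noteq> c 3 \<and> c 0 \<noteq> c 4 \<and>
     c 1 \<noteq> c 2 \<and> c 1 \<noteq> c 3 \<and> c 1 \<noteq> c 4 \<and> c 2 \<noteq> c 3 \<and> c 2 \<noteq> c 4 \<and> c 3 \<noteq> c 4 \<and>
     c 0 \<noteq> c 5 \<and> c 1 \<noteq> c 5 \<and> c 0 \<noteq> c 6"
  unfolding proper_colouring_def example_E_def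
  by (simp add: example_V_def doubleton_eq_iff) (safe; simp_all add: eq_commute)

definition six_colouring :: "nat \<Rightarrow> nat" where
  "six_colouring = (\<lambda>v. 0)(0 := 1, 1 := 2, 2 := 3, 3 := 4, 4 := 5, 5 := 6, 6 := 2)"

lemma proper_six_colouring: "proper_colouring example_V example_E 6 six_colouring"
  unfolding proper_colouring_example_iff six_colouring_def by (simp add: example_V_def)

lemma determining_set_six_colouring:
  "determining_set example_V example_E 6 six_colouring {2, 3, 4, 5, 6}"
  unfolding determining_set_def
proof (intro conjI notI)
  show "{2, 3, 4, 5, 6} \<subseteq> example_V" by (simp add: example_V_def)
next
  assume "\<exists>c. proper_colouring example_V example_E 6 c \<and>
    (\<forall>s\<in>{2, 3, 4, 5, 6}. c s = six_colouring s) \<and> (\<exists>v\<in>example_V. c v \<noteq> six_colouring v)"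
  then obtain c where c: "proper_colouring example_V example_E 6 c"
    "\<forall>s\<in>{2, 3, 4, 5, 6}. c s = six_colouring s" "\<exists>v\<in>example_V. c v \<noteq> six_colouring v"
    by blast
  have fixed: "c 2 = 3" "c 3 = 4" "c 4 = 5" "c 5 = 6" "c 6 = 2"
    using c(2) by (auto simp: six_colouring_def)
  have "c 0 = 1"
    using c(1) fixed unfolding proper_colouring_example_iff by (simp add: example_V_def) presburger
  moreover have "c 1 = 2"
    using c(1) fixed \<open>c 0 = 1\<close> unfolding proper_colouring_example_iff by (simp add: example_V_def)
  ultimately show False
    using c(3) fixed by (auto simp: example_V_def six_colouring_def)
qed

lemma critical_set_six_colouring:
  assumes "critical_set example_V example_E 6 six_colouring S"
  shows "S = {2, 3, 4, 5, 6}"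
proof -
  have det: "determining_set example_V example_E 6 six_colouring S"
    using assms unfolding critical_set_def by blast
  have recolour: "v \<in> S" if "proper_colouring example_V example_E 6 (six_colouring(v := a))"
    "a \<noteq> six_colouring v" "v \<in> example_V" for v a
    using recolourable_vertex_in_determining_set[OF det] that by blast
  have "{2, 3, 4, 5, 6} \<subseteq> S"
    using recolour[of 2 6] recolour[of 3 6] recolour[of 4 6] recolour[of 5 3] recolour[of 6 3]
    unfolding proper_colouring_example_iff by (simp add: six_colouring_def example_V_def)
  then show ?thesis
    using assms determining_set_six_colouring unfolding critical_set_def by blast
qed

lemma inj_on_clique_example:
  "proper_colouring example_V example_E k c \<Longrightarrow> inj_on c {0, 1, 2, 3, 4}"
  unfolding proper_colouring_example_iff inj_on_def by auto

lemma determining_set_five_colouring: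
  assumes pc: "proper_colouring example_V example_E 5 c" and x: "x \<in> {0, 1, 2, 3, 4}"
  shows "determining_set example_V example_E 5 c (example_V - {x})"
  unfolding determining_set_def
proof (intro conjI notI)
  show "example_V - {x} \<subseteq> example_V" by blast
next
  assume "\<exists>c'. proper_colouring example_V example_E 5 c' \<and> (\<forall>s\<in>example_V - {x}. c' s = c s) \<and>
    (\<exists>v\<in>example_V. c' v \<noteq> c v)"
  then obtain c' where pc': "proper_colouring example_V example_E 5 c'"
    and agree: "\<forall>s\<in>example_V - {x}. c' s = c s" and differ: "\<exists>v\<in>example_V. c' v \<noteq> c v"
    by blast
  let ?K = "{0, 1, 2, 3, 4} - {x}"
  have K: "?K \<subseteq> example_V" "x \<in> example_V" using x by (auto simp: example_V_def)
  have range: "c ` ?K \<subseteq> {1..5}"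
    using proper_colouring_range[OF pc] K(1) by blast
  have card: "card (c ` ?K) + 1 = 5"
  proof -
    have "inj_on c ?K" using inj_on_clique_example[OF pc] by (rule inj_on_subset) blast
    then have "card (c ` ?K) = card ?K" by (rule card_image)
    also have "\<dots> = 4" using x by auto
    finally show ?thesis by simp
  qed
  have "c ` ?K = c' ` ?K"
    using agree K(1) by (intro image_cong) auto
  then have "c x \<in> {1..5} - c ` ?K" "c' x \<in> {1..5} - c ` ?K"
    using proper_colouring_range[OF pc K(2)] proper_colouring_range[OF pc' K(2)]
      inj_on_clique_example[OF pc] inj_on_clique_example[OF pc'] x
    by (auto simp: inj_on_def)
  then have "c' x = c x" using unique_colour_outside[OF range card] by blast
  then show False using agree differ by (metis Diff_iff singletonD)
qed

lemma five_colouring_recolour: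
  assumes pc: "proper_colouring example_V example_E 5 c" and x: "x \<in> {2, 3, 4}"
    and "c x \<noteq> c 5" "c x \<noteq> c 6" and v: "v \<in> example_V" "v \<noteq> x"
  shows "\<exists>c'. proper_colouring example_V example_E 5 c' \<and>
    (\<forall>s\<in>example_V - {x, v}. c' s = c s) \<and> c' v \<noteq> c v"
proof -
  note P = pc[unfolded proper_colouring_example_iff]
  consider "v = 5" | "v = 6" | "v \<in> {0, 1, 2, 3, 4}" using v by (auto simp: example_V_def)
  then show ?thesis
  proof cases
    case 1
    obtain z where "z \<in> {1..5}" "z \<notin> {c 0, c 1, c 5}"
      using ex_colour_avoiding[of "[c 0, c 1, c 5]" 5] by auto
    then show ?thesis using P 1 x unfolding proper_colouring_example_iff
      by (intro exI[of _ "c(5 := z)"]) (auto simp: example_V_def)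
  next
    case 2
    obtain z where "z \<in> {1..5}" "z \<notin> {c 0, c 6}"
      using ex_colour_avoiding[of "[c 0, c 6]" 5] by auto
    then show ?thesis using P 2 x unfolding proper_colouring_example_iff
      by (intro exI[of _ "c(6 := z)"]) (auto simp: example_V_def)
  next
    case 3
    \<comment> \<open>swap the colours of \<open>x\<close> and \<open>v\<close>; \<open>x\<close> has no neighbour outside the clique, and
      \<open>c x\<close> differs from the colours of 5 and 6, the only neighbours of 0 and 1 outside it\<close>
    have "proper_colouring example_V example_E 5 (c(x := c v, v := c x)) \<and> c x \<noteq> c v"
      using x 3 v(2) P assms(3,4) unfolding proper_colouring_example_iff
      by (elim insertE) (auto simp: example_V_def)
    then show ?thesis by (intro exI[of _ "c(x := c v, v := c x)"]) auto
  qed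
qed

lemma critical_set_five_colouring:
  assumes pc: "proper_colouring example_V example_E 5 c" and x: "x \<in> {2, 3, 4}"
    and "c x \<noteq> c 5" "c x \<noteq> c 6"
  shows "critical_set example_V example_E 5 c (example_V - {x})"
  unfolding critical_set_iff_remove
proof (intro conjI ballI)
  show "determining_set example_V example_E 5 c (example_V - {x})"
    using determining_set_five_colouring[OF pc] x by blast
next
  fix v assume "v \<in> example_V - {x}"
  then obtain c' where "proper_colouring example_V example_E 5 c'"
    "\<forall>s\<in>example_V - {x, v}. c' s = c s" "c' v \<noteq> c v"
    using five_colouring_recolour[OF pc x assms(3,4)] by blast
  then show "\<not> determining_set example_V example_E 5 c (example_V - {x} - {v})"
    using \<open>v \<in> example_V - {x}\<close> by (intro not_determining_setI[of _ _ _ c']) auto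
qed

lemma lcs_five_colouring:
  assumes pc: "proper_colouring example_V example_E 5 c"
  shows "6 \<le> lcs example_V example_E 5 c"
proof -
  have "\<exists>x\<in>{2, 3, 4}. c x \<noteq> c 5 \<and> c x \<noteq> c 6"
    using pc unfolding proper_colouring_example_iff by auto
  then obtain x where x: "x \<in> {2, 3, 4}" "c x \<noteq> c 5" "c x \<noteq> c 6" by blast
  have "card (example_V - {x}) = 6" using x by (auto simp: example_V_def)
  then show ?thesis
    using card_le_lcs[OF finite_example_V critical_set_five_colouring[OF pc x]] by simp
qed

definition five_colouring :: "nat \<Rightarrow> nat" where
  "five_colouring = (\<lambda>v. 0)(0 := 1, 1 := 2, 2 := 3, 3 := 4, 4 := 5, 5 := 3, 6 := 2)"

lemma proper_five_colouring: "proper_colouring example_V example_E 5 five_colouring"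
  unfolding proper_colouring_example_iff five_colouring_def by (simp add: example_V_def)

theorem theorem7:
  shows "\<exists>(V :: nat set) (E :: nat set set) (k :: nat).
           simple_graph V E \<and> graph_connected V E \<and>
           chromatic_number V E + 1 \<le> k \<and>
           lcs_min V E k < lcs_min V E (k - 1)"
proof (intro exI conjI)
  show "simple_graph example_V example_E" by (rule simple_graph_example)
  show "graph_connected example_V example_E" by (rule graph_connected_example)
  have "chromatic_number example_V example_E \<le> 5"
    unfolding chromatic_number_def using proper_five_colouring by (intro Least_le) blast
  then show "chromatic_number example_V example_E + 1 \<le> 6" by simp
  have "lcs example_V example_E 6 six_colouring \<le> 5"
    using finite_example_V by (rule lcs_le) (auto dest: critical_set_six_colouring)
  then have "lcs_min example_V example_E 6 \<le> 5"
    using lcs_min_le[OF finite_example_V proper_six_colouring] by linarith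
  moreover have "6 \<le> lcs_min example_V example_E 5"
    using finite_example_V proper_five_colouring lcs_five_colouring by (rule le_lcs_min)
  ultimately show "lcs_min example_V example_E 6 < lcs_min example_V example_E (6 - 1)" by simp
qed

end
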